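(* Let $G$ be a finite abelian group of order coprime to $p$ and $\bar a=(a_1,\ldots,a_t)\in(\mathcal F(G,K))^t$, and let $\mathcal H\subseteq G^\vee$ be the set of $\bar a$-harmonic characters (a set stable under $g^\vee\mapsto(g^\vee)^q$). (a) There is a bijection between the set of traces $\mathrm{Tr}(g^\vee)\in\mathcal F(G,K)$, $g^\vee\in\mathcal H$, and the set of orbits of the cyclic group generated by $D_q:g^\vee\mapsto(g^\vee)^q$ acting on $\mathcal H$. (b) If $g_1^\vee,\ldots,g_m^\vee$ is a set of representatives of these orbits, then $$\ker(\Delta_{\bar a})=\bigoplus_{i=1}^m\big(\mathrm{Tr}(g_i^\vee)\big)\subseteq\mathcal F(G,K)$$ is a decomposition into an orthogonal direct sum of convolution ideals, where $(h)$ denotes the convolution ideal of $\mathcal F(G,K)$ generated by $h$. (c) For every $g^\vee\in G^\vee$ one has $$g^\vee=\frac1{|G|}\sum_{g\in G}g^\vee(-g)\,h_g,\qquad h_g(x)=\mathrm{Tr}(g^\vee)(g+x).$$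
   Context: $K=\mathrm{GF}(q)$, $q=p^r$, $\bar K$ an algebraic closure. $G$ is written additively; $\mathcal F(G,F)$ is the ring of functions $G\to F$ with convolution $(f*a)(g)=\sum_hf(h)a(g-h)$; $\Delta_af=f*a$, $\ker(\Delta_{\bar a})=\{f\in\mathcal F(G,K):f*a_j=0\ \forall j\}$. $G^\vee$ is the group of homomorphisms $G\to\bar K^\times$; $g^\vee$ is $\bar a$-harmonic if $g^\vee*a_j=0$ for all $j$. For $f\in\mathcal F(G,\bar K)$, let $\mathrm{GF}(q^{r(f)})$ be the smallest subfield of $\bar K$ containing $K$ and $f(G)$, and $\mathrm{Tr}(f)=f+f^q+\cdots+f^{q^{r(f)-1}}$ (pointwise powers). Orthogonality refers to $\langle f_1,f_2\rangle_1=\frac1{|G|}\sum_gf_1(g)f_2(-g)$. *)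

theory Defs
  imports "HOL-Algebra.Algebraic_Closure_Type" "HOL-Library.Cardinality"
begin

text \<open>K = 'k (a finite field, q = CARD('k)), the algebraic closure is 'k alg_closure,
  G = 'g (finite abelian group written additively).\<close>

definition conv :: "('g::{ab_group_add,finite} \<Rightarrow> 'f::comm_ring_1) \<Rightarrow> ('g \<Rightarrow> 'f) \<Rightarrow> 'g \<Rightarrow> 'f" where
  "conv f a = (\<lambda>g. \<Sum>h\<in>UNIV. f h * a (g - h))"

definition ker_Delta :: "nat \<Rightarrow> (nat \<Rightarrow> 'g::{ab_group_add,finite} \<Rightarrow> 'k::field) \<Rightarrow> ('g \<Rightarrow> 'k) set" where
  "ker_Delta t a = {f. \<forall>j<t. conv f (a j) = (\<lambda>_. 0)}"

definition dual_group :: "('g::{ab_group_add,finite} \<Rightarrow> 'k::field alg_closure) set" where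
  "dual_group = {\<chi>. (\<forall>x y. \<chi> (x + y) = \<chi> x * \<chi> y) \<and> (\<forall>x. \<chi> x \<noteq> 0)}"

definition harmonic :: "nat \<Rightarrow> (nat \<Rightarrow> 'g::{ab_group_add,finite} \<Rightarrow> 'k::field) \<Rightarrow> ('g \<Rightarrow> 'k alg_closure) \<Rightarrow> bool" where
  "harmonic t a \<chi> \<longleftrightarrow> (\<forall>j<t. conv \<chi> (\<lambda>x. to_ac (a j x)) = (\<lambda>_. 0))"

definition harmonic_chars :: "nat \<Rightarrow> (nat \<Rightarrow> 'g::{ab_group_add,finite} \<Rightarrow> 'k::field) \<Rightarrow> ('g \<Rightarrow> 'k alg_closure) set" where
  "harmonic_chars t a = {\<chi> \<in> dual_group. harmonic t a \<chi>}"

definition Dq :: "('g \<Rightarrow> 'k::{field,finite} alg_closure) \<Rightarrow> ('g \<Rightarrow> 'k alg_closure)" where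
  "Dq f = (\<lambda>x. f x ^ CARD('k))"

text \<open>r(f): GF(q^{r(f)}) is the smallest subfield of Kbar containing K and f(G).
  The subfield GF(q^n) of Kbar is exactly the set of y with y^(q^n) = y, so r(f) is the
  least n \<ge> 1 with f(G) contained in it.\<close>
definition rdeg :: "('g::finite \<Rightarrow> 'k::{field,finite} alg_closure) \<Rightarrow> nat" where
  "rdeg f = (LEAST n. n \<ge> 1 \<and> (\<forall>x. f x ^ (CARD('k) ^ n) = f x))"

definition Tr :: "('g::finite \<Rightarrow> 'k::{field,finite} alg_closure) \<Rightarrow> ('g \<Rightarrow> 'k alg_closure)" where
  "Tr f = (\<lambda>x. \<Sum>i<rdeg f. f x ^ (CARD('k) ^ i))"

text \<open>The trace regarded as a K-valued function (meaningful when its values lie in K).\<close>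
definition TrK :: "('g::finite \<Rightarrow> 'k::{field,finite} alg_closure) \<Rightarrow> ('g \<Rightarrow> 'k)" where
  "TrK f = (\<lambda>x. of_ac (Tr f x))"

definition Dq_orbit :: "('g \<Rightarrow> 'k::{field,finite} alg_closure) \<Rightarrow> ('g \<Rightarrow> 'k alg_closure) set" where
  "Dq_orbit f = {(Dq ^^ n) f | n. True}"

text \<open>Convolution ideal of F(G,K) generated by h (the ring is commutative with unit).\<close>
definition conv_ideal :: "('g::{ab_group_add,finite} \<Rightarrow> 'k::field) \<Rightarrow> ('g \<Rightarrow> 'k) set" where
  "conv_ideal h = {conv h u | u. True}"

definition ip1 :: "('g::{ab_group_add,finite} \<Rightarrow> 'k::field) \<Rightarrow> ('g \<Rightarrow> 'k) \<Rightarrow> 'k" where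
  "ip1 f1 f2 = (\<Sum>g\<in>UNIV. f1 g * f2 (- g)) / of_nat CARD('g)"

end

(*
  Since |G| is invertible in K, characters G -> Kbar^x separate the points of G (a character of a
  subgroup extends one generator at a time, by extracting roots in Kbar), which yields Fourier
  inversion |G| f = sum of f * chi over all characters chi.  Each chi is an eigenvector of
  convolution by every a_j, so f * chi = 0 for f in ker(Delta_a) unless chi is harmonic.  The sum
  of a Frobenius orbit of characters is the trace Tr(chi); it is fixed by y -> y^q, hence K-valued,
  and the orthogonality chi * psi = |G| [chi = psi] chi turns into Tr(chi) * Tr(psi) =
  |G| [same orbit] Tr(chi).  Hence the traces of representatives of the harmonic orbits are, up to
  the unit |G|, orthogonal idempotents of the convolution algebra whose sum acts as the identity on
  ker(Delta_a), and chi * Tr(chi) = |G| chi gives (c).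
*)
theory Submission
  imports Defs "HOL-Algebra.Multiplicative_Group" "HOL-Number_Theory.Residues" "HOL-Combinatorics.Orbits"
begin

section \<open>Natural multiples and additively closed sets\<close>

primrec natmul :: "nat \<Rightarrow> 'a::monoid_add \<Rightarrow> 'a" where
  "natmul 0 x = 0"
| "natmul (Suc n) x = x + natmul n x"

lemma natmul_add: "natmul (m + n) x = natmul m x + natmul n x"
  by (induction m) (simp_all add: add.assoc)

lemma natmul_mult: "natmul (m * n) x = natmul m (natmul n x)"
  by (induction m) (simp_all add: natmul_add)

lemma natmul_eq_of_nat_mult: "natmul n x = of_nat n * (x :: 'a::semiring_1)"
  by (induction n) (simp_all add: algebra_simps)

lemma natmul_card: "natmul CARD('a) (x :: 'a::{ab_group_add,finite}) = 0"
proof -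
  have shift: "(\<Sum>y\<in>A. y + x) = (\<Sum>y\<in>A. y) + natmul (card A) x" if "finite A" for A :: "'a set"
    using that by (induction A rule: finite_induct) (simp_all add: algebra_simps)
  have "(\<Sum>y\<in>UNIV. y + x) = (\<Sum>y\<in>UNIV. y)"
    by (rule sum.reindex_bij_witness[of _ "\<lambda>y. y - x" "\<lambda>y. y + x"]) auto
  then show ?thesis
    using shift[of UNIV] by simp
qed

definition add_closed :: "'a::monoid_add set \<Rightarrow> bool" where
  "add_closed A \<longleftrightarrow> 0 \<in> A \<and> (\<forall>x\<in>A. \<forall>y\<in>A. x + y \<in> A)"

lemma add_closed_add: "add_closed A \<Longrightarrow> x \<in> A \<Longrightarrow> y \<in> A \<Longrightarrow> x + y \<in> A"
  by (simp add: add_closed_def)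

lemma add_closed_natmul: "add_closed A \<Longrightarrow> x \<in> A \<Longrightarrow> natmul n x \<in> A"
  by (induction n) (simp_all add: add_closed_def)

lemma add_closed_uminus:
  fixes x :: "'a::{ab_group_add,finite}"
  assumes A: "add_closed A" and x: "x \<in> A"
  shows "-x \<in> A"
proof -
  obtain n where n: "CARD('a) = Suc n"
    using not0_implies_Suc[of "CARD('a)"] by auto
  have "x + natmul n x = 0"
    using natmul_card[of x] by (simp add: n)
  then have "-x = natmul n x"
    by (rule add.inverse_unique)
  with add_closed_natmul[OF A x] show ?thesis
    by simp
qed

lemma add_closed_diff:
  fixes x y :: "'a::{ab_group_add,finite}"
  shows "add_closed A \<Longrightarrow> x \<in> A \<Longrightarrow> y \<in> A \<Longrightarrow> x - y \<in> A"
  using add_closed_add[of A x "-y"] add_closed_uminus[of A y] by simp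


section \<open>Finite fields\<close>

lemma prime_CHAR_finite_field: "prime CHAR('k::{field,finite})"
  by (rule prime_CHAR_semidom) (rule finite_imp_CHAR_pos, simp)

lemma of_nat_neq_0_if_coprime_CHAR:
  assumes "coprime n CHAR('a::idom)" and "m dvd n"
  shows "of_nat m \<noteq> (0 :: 'a)"
proof
  assume "of_nat m = (0 :: 'a)"
  then have "CHAR('a) dvd gcd n CHAR('a)"
    using assms(2) by (simp add: of_nat_eq_0_iff_char_dvd dvd_trans)
  with assms(1) have "CHAR('a) = 1"
    by simp
  then show False
    using of_nat_CHAR[where 'a='a] by simp
qed

lemma of_nat_card_alg_closure_neq_0:
  assumes "coprime CARD('g) CHAR('k::field)"
  shows "of_nat CARD('g) \<noteq> (0 :: 'k alg_closure)"
  using of_nat_neq_0_if_coprime_CHAR[where 'a = "'k alg_closure", of "CARD('g)" "CARD('g)"] assms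
  by simp

lemma finite_field_power_card: "(x :: 'k::{field,finite}) ^ CARD('k) = x"
proof (cases "x = 0")
  case False
  define G where "G = Multiplicative_Group.mult_of (ring_of_type_algebra :: 'k ring)"
  interpret G: group G
    unfolding G_def by (rule field.field_mult_group) blast
  have carrier: "carrier G = UNIV - {0}"
    by (simp add: G_def ring_of_type_algebra_def)
  have pow: "x [^]\<^bsub>G\<^esub> n = x ^ n" for n
    by (induction n) (simp_all add: G_def ring_of_type_algebra_def)
  have "Coset.order G = CARD('k) - 1"
    unfolding Coset.order_def carrier by (simp add: card_Diff_singleton)
  moreover have "x [^]\<^bsub>G\<^esub> Coset.order G = 1"
  proof -
    have "\<one>\<^bsub>G\<^esub> = 1"
      by (simp add: G_def ring_of_type_algebra_def)
    with G.pow_order_eq_1[of x] show ?thesis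
      using False carrier by simp
  qed
  ultimately have "x ^ (CARD('k) - 1) = 1"
    by (simp add: pow)
  moreover obtain n where "CARD('k) = Suc n"
    using not0_implies_Suc[of "CARD('k)"] by auto
  ultimately show ?thesis
    by simp
qed (simp add: finite_UNIV_card_ge_0)

lemma add_closed_of_nat_mult_cancel:
  fixes x :: "'k::{field,finite}"
  assumes B: "add_closed B" and d: "0 < d" "d < CHAR('k)" and dx: "of_nat d * x \<in> B"
  shows "x \<in> B"
proof -
  have "coprime d CHAR('k)"
    using d prime_CHAR_finite_field[where 'k='k]
    by (metis coprime_commute dvd_imp_le not_le prime_imp_coprime)
  then obtain u where "[d * u = 1] (mod CHAR('k))"
    using cong_solve_coprime_nat[of d "CHAR('k)"] by auto
  then have "of_nat (u * d) = (1 :: 'k)"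
    using of_nat_eq_iff_cong_CHAR[where 'a='k, of "d * u" 1] by (simp add: mult.commute)
  then have "natmul u (of_nat d * x) = x"
    by (simp add: natmul_eq_of_nat_mult mult.assoc[symmetric])
  with add_closed_natmul[OF B dx, of u] show ?thesis
    by simp
qed

lemma inj_on_add_closed_extend:
  fixes x :: "'k::{field,finite}"
  assumes B: "add_closed B" and x: "x \<notin> B"
  shows "inj_on (\<lambda>(b, k). b + of_nat k * x) (B \<times> {..<CHAR('k)})"
proof -
  have same_k: "k = k'" if "b + of_nat k * x = b' + of_nat k' * x" "b \<in> B" "b' \<in> B"
    and "k' \<le> k" "k < CHAR('k)" for b b' k k'
  proof (rule ccontr)
    assume "k \<noteq> k'"
    have "of_nat (k - k') * x = b' - b"
      using that by (simp add: of_nat_diff algebra_simps)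
    then have "x \<in> B"
      using add_closed_of_nat_mult_cancel[OF B, of "k - k'"] add_closed_diff[OF B]
        that \<open>k \<noteq> k'\<close> by simp
    with x show False ..
  qed
  show ?thesis
  proof (rule inj_onI, clarify)
    fix b k b' k'
    assume "b + of_nat k * x = b' + of_nat k' * x" "b \<in> B" "k < CHAR('k)" "b' \<in> B" "k' < CHAR('k)"
    then have "k = k'"
      using same_k[of b k b' k'] same_k[of b' k' b k] by (cases "k' \<le> k") auto
    with \<open>b + of_nat k * x = b' + of_nat k' * x\<close> show "b = b' \<and> k = k'"
      by simp
  qed
qed

lemma card_add_closed_extend:
  fixes x :: "'k::{field,finite}"
  assumes B: "add_closed B" and x: "x \<notin> B"
  defines "B' \<equiv> (\<lambda>(b, k). b + of_nat k * x) ` (B \<times> {..<CHAR('k)})"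
  shows "add_closed B'" "B \<subseteq> B'" "x \<in> B'" "card B' = CHAR('k) * card B"
proof -
  let ?p = "CHAR('k)"
  have p: "1 < ?p"
    using prime_CHAR_finite_field prime_gt_1_nat by blast
  have mem: "b + of_nat k * x \<in> B'" if "b \<in> B" for b k
  proof -
    have "b + of_nat k * x = b + of_nat (k mod ?p) * x"
      using of_nat_eq_iff_cong_CHAR[of k "k mod ?p", where 'a='k] by (simp add: cong_def)
    moreover have "k mod ?p < ?p"
      using p by simp
    ultimately show ?thesis
      unfolding B'_def using that by force
  qed
  show "B \<subseteq> B'"
    using mem[of _ 0] by auto
  show "x \<in> B'"
    using mem[of 0 1] B by (simp add: add_closed_def)
  show "add_closed B'"
    unfolding add_closed_def
  proof (intro conjI ballI)
    show "0 \<in> B'"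
      using mem[of 0 0] B by (simp add: add_closed_def)
    fix y z assume "y \<in> B'" "z \<in> B'"
    then obtain b1 k1 b2 k2 where "b1 \<in> B" "b2 \<in> B"
      and "y = b1 + of_nat k1 * x" "z = b2 + of_nat k2 * x"
      unfolding B'_def by auto
    then show "y + z \<in> B'"
      using mem[of "b1 + b2" "k1 + k2"] add_closed_add[OF B] by (simp add: algebra_simps)
  qed
  show "card B' = ?p * card B"
    unfolding B'_def by (simp add: card_image[OF inj_on_add_closed_extend[OF B x]] card_cartesian_product)
qed

lemma card_finite_field_prime_power: "\<exists>e. CARD('k::{field,finite}) = CHAR('k) ^ e"
proof -
  have grow: "\<exists>e. CARD('k) = CHAR('k) ^ e"
    if "add_closed B" "card B = CHAR('k) ^ e" for B :: "'k set" and e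
    using that
  proof (induction "card (UNIV - B)" arbitrary: B e rule: less_induct)
    case less
    show ?case
    proof (cases "B = UNIV")
      case True
      with less.prems show ?thesis
        by blast
    next
      case False
      then obtain x where x: "x \<notin> B"
        by auto
      define B' where "B' = (\<lambda>(b, k). b + of_nat k * x) ` (B \<times> {..<CHAR('k)})"
      note B' = card_add_closed_extend[OF less.prems(1) x, folded B'_def]
      have "card (UNIV - B') < card (UNIV - B)"
        using B' x by (intro psubset_card_mono) auto
      moreover have "card B' = CHAR('k) ^ Suc e"
        using B' less.prems by simp
      ultimately show ?thesis
        using less.hyps B' by blast
    qed
  qed
  show ?thesis
    using grow[of "{0}" 0] by (simp add: add_closed_def)
qed

lemma frobenius_sum:
  fixes f :: "'b \<Rightarrow> 'k::{field,finite} alg_closure"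
  shows "(sum f A) ^ (CARD('k) ^ n) = (\<Sum>i\<in>A. f i ^ (CARD('k) ^ n))"
proof -
  obtain e where "CARD('k) = CHAR('k) ^ e"
    using card_finite_field_prime_power by blast
  then show ?thesis
    using prime_CHAR_finite_field[where 'k='k]
    by (intro freshmans_dream_sum'[where n="e * n"]) (simp_all add: power_mult)
qed

lemma frobenius_fixed_in_range_to_ac:
  fixes y :: "'k::{field,finite} alg_closure"
  assumes "y ^ CARD('k) = y"
  shows "y \<in> range to_ac"
proof -
  let ?q = "CARD('k)"
  define S where "S = {z :: 'k alg_closure. z ^ ?q = z}"
  define P where "P = monom (1 :: 'k alg_closure) ?q + [:0, -1:]"
  have "card {0::'k, 1} \<le> ?q"
    by (rule card_mono) simp_all
  then have q: "2 \<le> ?q"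
    by simp
  then have "degree P = ?q"
    unfolding P_def by (subst degree_add_eq_left) (simp_all add: degree_monom_eq)
  with q have "P \<noteq> 0"
    by auto
  have roots: "{z. poly P z = 0} = S"
    by (simp add: S_def P_def poly_monom)
  have "to_ac x ^ ?q = to_ac x" for x :: 'k
    by (simp flip: to_ac_power add: finite_field_power_card)
  then have "range to_ac \<subseteq> S"
    by (auto simp: S_def)
  moreover have "finite S"
    using poly_roots_finite[OF \<open>P \<noteq> 0\<close>] roots by simp
  moreover have "card S \<le> card (range (to_ac :: 'k \<Rightarrow> _))"
    using card_poly_roots_bound[OF \<open>P \<noteq> 0\<close>] \<open>degree P = ?q\<close> roots
    by (simp add: card_image[OF inj_to_ac])
  ultimately have "range to_ac = S"
    by (simp add: card_seteq)
  with assms show ?thesis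
    by (simp add: S_def)
qed


section \<open>The convolution algebra\<close>

lemma conv_commute: "conv f u = conv u (f :: 'g::{ab_group_add,finite} \<Rightarrow> 'a::comm_ring_1)"
  unfolding conv_def
proof (rule ext)
  fix x
  show "(\<Sum>h\<in>UNIV. f h * u (x - h)) = (\<Sum>h\<in>UNIV. u h * f (x - h))"
    by (rule sum.reindex_bij_witness[of _ "\<lambda>h. x - h" "\<lambda>h. x - h"]) (auto simp: mult.commute)
qed

lemma conv_assoc: "conv (conv f u) v = conv f (conv u (v :: 'g::{ab_group_add,finite} \<Rightarrow> 'a::comm_ring_1))"
proof
  fix x
  have "conv (conv f u) v x = (\<Sum>h\<in>UNIV. \<Sum>k\<in>UNIV. f k * u (h - k) * v (x - h))"
    by (simp add: conv_def sum_distrib_right)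
  also have "\<dots> = (\<Sum>k\<in>UNIV. \<Sum>h\<in>UNIV. f k * u (h - k) * v (x - h))"
    by (rule sum.swap)
  also have "\<dots> = (\<Sum>k\<in>UNIV. \<Sum>h\<in>UNIV. f k * (u h * v (x - k - h)))"
  proof (rule sum.cong[OF refl])
    fix k
    show "(\<Sum>h\<in>UNIV. f k * u (h - k) * v (x - h)) = (\<Sum>h\<in>UNIV. f k * (u h * v (x - k - h)))"
      by (rule sum.reindex_bij_witness[of _ "\<lambda>h. h + k" "\<lambda>h. h - k"]) (auto simp: algebra_simps)
  qed
  also have "\<dots> = conv f (conv u v) x"
    by (simp add: conv_def sum_distrib_left)
  finally show "conv (conv f u) v x = conv f (conv u v) x" .
qed

lemma conv_sum_left: "conv (\<lambda>x. \<Sum>i\<in>A. f i x) u = (\<lambda>x. \<Sum>i\<in>A. conv (f i) u x)"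
  unfolding conv_def by (simp add: sum_distrib_right) (rule ext, rule sum.swap)

lemma conv_sum_right: "conv u (\<lambda>x. \<Sum>i\<in>A. f i x) = (\<lambda>x. \<Sum>i\<in>A. conv u (f i) x)"
  by (simp add: conv_commute[of u] conv_sum_left)

lemma conv_mult_left: "conv (\<lambda>x. c * f x) u = (\<lambda>x. c * conv f u x)"
  unfolding conv_def by (simp add: sum_distrib_left mult_ac)

lemma conv_zero_left [simp]: "conv (\<lambda>_. 0) u = (\<lambda>_. 0)"
  by (simp add: conv_def)

lemma conv_zero_right [simp]: "conv u (\<lambda>_. 0) = (\<lambda>_. 0)"
  by (simp add: conv_def)

lemma to_ac_conv: "to_ac (conv f u x) = conv (\<lambda>y. to_ac (f y)) (\<lambda>y. to_ac (u y)) x"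
  by (simp add: conv_def to_ac_sum)


section \<open>Characters\<close>

lemma character_add: "\<chi> \<in> dual_group \<Longrightarrow> \<chi> (x + y) = \<chi> x * \<chi> y"
  by (simp add: dual_group_def)

lemma character_nonzero: "\<chi> \<in> dual_group \<Longrightarrow> \<chi> x \<noteq> 0"
  by (simp add: dual_group_def)

lemma character_zero: "\<chi> \<in> dual_group \<Longrightarrow> \<chi> 0 = 1"
  using character_add[of \<chi> 0 0] character_nonzero[of \<chi> 0] by simp

lemma character_uminus: "\<chi> \<in> dual_group \<Longrightarrow> \<chi> (-x) * \<chi> x = 1"
  using character_add[of \<chi> "-x" x] character_zero[of \<chi>] by simp

lemma character_natmul: "\<chi> \<in> dual_group \<Longrightarrow> \<chi> (natmul n x) = \<chi> x ^ n"
  by (induction n) (simp_all add: character_zero character_add)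

lemma character_power_card:
  fixes \<chi> :: "'g::{ab_group_add,finite} \<Rightarrow> 'k::field alg_closure"
  shows "\<chi> \<in> dual_group \<Longrightarrow> \<chi> x ^ CARD('g) = 1"
  using character_natmul[of \<chi> "CARD('g)" x] by (simp add: natmul_card character_zero)

lemma one_in_dual_group: "(\<lambda>_. 1) \<in> dual_group"
  by (simp add: dual_group_def)

lemma dual_group_mult: "\<chi> \<in> dual_group \<Longrightarrow> \<psi> \<in> dual_group \<Longrightarrow> (\<lambda>x. \<chi> x * \<psi> x) \<in> dual_group"
  by (simp add: dual_group_def mult_ac)

lemma dual_group_uminus:
  assumes "\<chi> \<in> dual_group"
  shows "(\<lambda>x. \<chi> (-x)) \<in> dual_group"
proof -
  have "\<chi> (- (x + y)) = \<chi> (-x) * \<chi> (-y)" for x y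
    using character_add[OF assms, of "-x" "-y"] by (simp add: add.commute)
  with character_nonzero[OF assms] show ?thesis
    by (simp add: dual_group_def del: minus_add_distrib)
qed

lemma dual_group_power: "\<chi> \<in> dual_group \<Longrightarrow> (\<lambda>x. \<chi> x ^ n) \<in> dual_group"
  by (simp add: dual_group_def power_mult_distrib)

lemma finite_dual_group: "finite (dual_group :: ('g::{ab_group_add,finite} \<Rightarrow> 'k::field alg_closure) set)"
proof -
  define P where "P = monom (1 :: 'k alg_closure) CARD('g) - 1"
  have "coeff P CARD('g) = 1"
    by (simp add: P_def)
  then have "P \<noteq> 0"
    by auto
  then have "finite (PiE (UNIV :: 'g set) (\<lambda>_. {z. poly P z = 0}))"
    by (intro finite_PiE poly_roots_finite) simp_all
  moreover have "(dual_group :: ('g \<Rightarrow> 'k alg_closure) set) \<subseteq> PiE UNIV (\<lambda>_. {z. poly P z = 0})"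
    by (auto simp: P_def poly_monom character_power_card)
  ultimately show ?thesis
    by (rule finite_subset[rotated])
qed

lemma sum_character:
  fixes \<chi> :: "'g::{ab_group_add,finite} \<Rightarrow> 'k::field alg_closure"
  assumes \<chi>: "\<chi> \<in> dual_group"
  shows "(\<Sum>x\<in>UNIV. \<chi> x) = (if \<chi> = (\<lambda>_. 1) then of_nat CARD('g) else 0)"
proof (cases "\<chi> = (\<lambda>_. 1)")
  case False
  then obtain y where y: "\<chi> y \<noteq> 1"
    by auto
  have "(\<Sum>x\<in>UNIV. \<chi> x) = (\<Sum>x\<in>UNIV. \<chi> (x + y))"
    by (rule sum.reindex_bij_witness[of _ "\<lambda>x. x + y" "\<lambda>x. x - y"]) auto
  also have "\<dots> = \<chi> y * (\<Sum>x\<in>UNIV. \<chi> x)"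
    by (simp add: character_add[OF \<chi>] sum_distrib_left mult.commute)
  finally have "(\<chi> y - 1) * (\<Sum>x\<in>UNIV. \<chi> x) = 0"
    by (simp add: algebra_simps)
  with y False show ?thesis
    by simp
qed simp

lemma sum_character_mult_inverse:
  fixes \<chi> \<psi> :: "'g::{ab_group_add,finite} \<Rightarrow> 'k::field alg_closure"
  assumes \<chi>: "\<chi> \<in> dual_group" and \<psi>: "\<psi> \<in> dual_group"
  shows "(\<Sum>x\<in>UNIV. \<chi> x * \<psi> (-x)) = (if \<chi> = \<psi> then of_nat CARD('g) else 0)"
proof -
  have "(\<lambda>x. \<chi> x * \<psi> (-x)) = (\<lambda>_. 1) \<longleftrightarrow> \<chi> = \<psi>"
  proof
    assume "(\<lambda>x. \<chi> x * \<psi> (-x)) = (\<lambda>_. 1)"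
    then have "\<chi> x * (\<psi> (-x) * \<psi> x) = \<psi> x" for x
      by (metis mult.assoc mult_1)
    then show "\<chi> = \<psi>"
      by (simp add: character_uminus[OF \<psi>] fun_eq_iff)
  qed (use character_uminus[OF \<psi>] in \<open>simp add: mult.commute\<close>)
  then show ?thesis
    using sum_character[OF dual_group_mult[OF \<chi> dual_group_uminus[OF \<psi>]]] by simp
qed

lemma conv_character:
  assumes "\<chi> \<in> dual_group"
  shows "conv F \<chi> = (\<lambda>x. (\<Sum>h\<in>UNIV. F h * \<chi> (-h)) * \<chi> x)"
proof
  fix x
  have "\<chi> (x - h) = \<chi> x * \<chi> (-h)" for h
    using character_add[OF assms, of x "-h"] by simp
  then show "conv F \<chi> x = (\<Sum>h\<in>UNIV. F h * \<chi> (-h)) * \<chi> x"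
    by (simp add: conv_def sum_distrib_left sum_distrib_right mult_ac)
qed

lemma conv_characters:
  fixes \<chi> \<psi> :: "'g::{ab_group_add,finite} \<Rightarrow> 'k::field alg_closure"
  assumes "\<chi> \<in> dual_group" "\<psi> \<in> dual_group"
  shows "conv \<chi> \<psi> = (if \<chi> = \<psi> then (\<lambda>x. of_nat CARD('g) * \<chi> x) else (\<lambda>_. 0))"
  using sum_character_mult_inverse[OF assms] by (simp add: conv_character[OF assms(2)])


section \<open>Extending characters from subgroups\<close>

definition character_on :: "'g::ab_group_add set \<Rightarrow> ('g \<Rightarrow> 'a::field) \<Rightarrow> bool" where
  "character_on H \<chi> \<longleftrightarrow> (\<forall>x\<in>H. \<forall>y\<in>H. \<chi> (x + y) = \<chi> x * \<chi> y) \<and> (\<forall>x\<in>H. \<chi> x \<noteq> 0)"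

lemma character_on_zero:
  assumes "add_closed H" "character_on H \<chi>"
  shows "\<chi> 0 = 1"
proof -
  have "\<chi> (0 + 0) = \<chi> 0 * \<chi> 0" "\<chi> 0 \<noteq> 0"
    using assms unfolding add_closed_def character_on_def by blast+
  then show ?thesis
    by simp
qed

lemma character_on_natmul:
  assumes H: "add_closed H" and \<chi>: "character_on H \<chi>" and x: "x \<in> H"
  shows "\<chi> (natmul n x) = \<chi> x ^ n"
proof (induction n)
  case 0
  show ?case
    using character_on_zero[OF H \<chi>] by simp
next
  case (Suc n)
  then show ?case
    using \<chi> x add_closed_natmul[OF H x, of n] by (simp add: character_on_def)
qed

definition order_mod :: "'g::{ab_group_add,finite} set \<Rightarrow> 'g \<Rightarrow> nat" where
  "order_mod H g = (LEAST m. 0 < m \<and> natmul m g \<in> H)"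

lemma
  fixes g :: "'g::{ab_group_add,finite}"
  assumes H: "add_closed H"
  shows order_mod_pos: "0 < order_mod H g"
    and natmul_order_mod: "natmul (order_mod H g) g \<in> H"
    and order_mod_dvd: "natmul j g \<in> H \<Longrightarrow> order_mod H g dvd j"
proof -
  let ?P = "\<lambda>m. 0 < m \<and> natmul m g \<in> H"
  have "?P CARD('g)"
    using H by (simp add: natmul_card add_closed_def)
  then have P: "?P (order_mod H g)"
    unfolding order_mod_def by (rule LeastI)
  then show "0 < order_mod H g" "natmul (order_mod H g) g \<in> H"
    by simp_all
  assume j: "natmul j g \<in> H"
  let ?m = "order_mod H g"
  have "natmul j g = natmul (j div ?m * ?m) g + natmul (j mod ?m) g"
    by (simp only: natmul_add[symmetric] div_mult_mod_eq)
  then have "natmul (j mod ?m) g = natmul j g - natmul (j div ?m * ?m) g"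
    by (simp add: algebra_simps)
  moreover have "natmul (j div ?m * ?m) g \<in> H"
    using add_closed_natmul[OF H] P by (simp add: natmul_mult)
  ultimately have "natmul (j mod ?m) g \<in> H"
    using add_closed_diff[OF H j] by simp
  moreover have "j mod ?m < ?m"
    using P by simp
  ultimately show "?m dvd j"
    using not_less_Least[of "j mod ?m" ?P] unfolding order_mod_def by auto
qed

definition adjoin :: "'g::monoid_add set \<Rightarrow> 'g \<Rightarrow> 'g set" where
  "adjoin H g = {h + natmul k g | h k. h \<in> H}"

lemma add_closed_adjoin:
  fixes g :: "'g::comm_monoid_add"
  assumes H: "add_closed H"
  shows "add_closed (adjoin H g)"
  unfolding add_closed_def
proof (intro conjI ballI)
  show "0 \<in> adjoin H g"
    using H by (force simp: adjoin_def add_closed_def intro: exI[of _ 0])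
  fix x y assume "x \<in> adjoin H g" "y \<in> adjoin H g"
  then obtain h1 k1 h2 k2 where "h1 \<in> H" "h2 \<in> H" "x = h1 + natmul k1 g" "y = h2 + natmul k2 g"
    by (auto simp: adjoin_def)
  moreover have "h1 + natmul k1 g + (h2 + natmul k2 g) = (h1 + h2) + natmul (k1 + k2) g"
    by (simp add: natmul_add algebra_simps)
  ultimately show "x + y \<in> adjoin H g"
    using add_closed_add[OF H] by (auto simp: adjoin_def)
qed

lemma insert_subset_adjoin: "add_closed H \<Longrightarrow> insert g H \<subseteq> adjoin H g"
  by (force simp: adjoin_def add_closed_def intro: exI[of _ 0] exI[of _ "Suc 0"])

text \<open>The choice made by \<open>SOME\<close> is immaterial when \<open>z\<close> is an \<open>m\<close>-th root of \<open>\<chi> (m g)\<close>,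
  \<open>m = order_mod H g\<close>; see \<open>extend_character_welldefined\<close>.\<close>
definition extend_character :: "'g::monoid_add set \<Rightarrow> ('g \<Rightarrow> 'a::field) \<Rightarrow> 'g \<Rightarrow> 'a \<Rightarrow> 'g \<Rightarrow> 'a" where
  "extend_character H \<chi> g z y = (SOME v. \<exists>h k. h \<in> H \<and> y = h + natmul k g \<and> v = \<chi> h * z ^ k)"

lemma extend_character_welldefined:
  fixes g :: "'g::{ab_group_add,finite}"
  assumes H: "add_closed H" and \<chi>: "character_on H \<chi>"
    and z: "z ^ order_mod H g = \<chi> (natmul (order_mod H g) g)"
    and h: "h \<in> H" "h' \<in> H" and eq: "h + natmul k g = h' + natmul k' g"
  shows "\<chi> h * z ^ k = \<chi> h' * z ^ k'"
proof -
  let ?m = "order_mod H g"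
  have oriented: "\<chi> h * z ^ k = \<chi> h' * z ^ k'"
    if "h \<in> H" "h' \<in> H" "h + natmul k g = h' + natmul k' g" "k \<le> k'" for h h' k k'
  proof -
    have "natmul k' g = natmul (k' - k) g + natmul k g"
      using \<open>k \<le> k'\<close> by (simp flip: natmul_add)
    then have h_eq: "h = h' + natmul (k' - k) g"
      using that(3) by (simp add: algebra_simps)
    then have "natmul (k' - k) g \<in> H"
      using add_closed_diff[OF H that(1,2)] by (simp add: algebra_simps)
    then obtain l where l: "k' - k = ?m * l"
      using order_mod_dvd[OF H] by blast
    have "\<chi> h = \<chi> h' * \<chi> (natmul ?m g) ^ l"
      using \<chi> that(2) add_closed_natmul[OF H natmul_order_mod[OF H]]
      by (simp add: h_eq l mult.commute[of ?m] natmul_mult character_on_def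
          character_on_natmul[OF H \<chi> natmul_order_mod[OF H]])
    also have "\<dots> = \<chi> h' * z ^ (k' - k)"
      by (simp add: z[symmetric] l power_mult)
    finally show ?thesis
      using \<open>k \<le> k'\<close> by (simp add: mult.assoc power_add[symmetric])
  qed
  show ?thesis
    using oriented[OF h eq] oriented[OF h(2,1) eq[symmetric]] by (cases "k \<le> k'") auto
qed

lemma extend_character_eq:
  fixes g :: "'g::{ab_group_add,finite}"
  assumes H: "add_closed H" and \<chi>: "character_on H \<chi>"
    and z: "z ^ order_mod H g = \<chi> (natmul (order_mod H g) g)" and h: "h \<in> H"
  shows "extend_character H \<chi> g z (h + natmul k g) = \<chi> h * z ^ k"
proof -
  have "\<exists>v h' k'. h' \<in> H \<and> h + natmul k g = h' + natmul k' g \<and> v = \<chi> h' * z ^ k'"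
    using h by blast
  from someI_ex[OF this] obtain h' k' where "h' \<in> H" "h + natmul k g = h' + natmul k' g"
    "extend_character H \<chi> g z (h + natmul k g) = \<chi> h' * z ^ k'"
    unfolding extend_character_def by blast
  then show ?thesis
    using extend_character_welldefined[OF H \<chi> z h] by simp
qed

lemma character_on_adjoin:
  fixes g :: "'g::{ab_group_add,finite}"
  assumes H: "add_closed H" and \<chi>: "character_on H \<chi>"
    and z: "z ^ order_mod H g = \<chi> (natmul (order_mod H g) g)"
  shows "character_on (adjoin H g) (extend_character H \<chi> g z)"
  unfolding character_on_def
proof (intro conjI ballI)
  note ext = extend_character_eq[OF H \<chi> z]
  fix x y assume "x \<in> adjoin H g" "y \<in> adjoin H g"
  then obtain h1 k1 h2 k2 where hk: "h1 \<in> H" "h2 \<in> H" "x = h1 + natmul k1 g" "y = h2 + natmul k2 g"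
    by (auto simp: adjoin_def)
  have "x + y = (h1 + h2) + natmul (k1 + k2) g"
    using hk(3,4) by (simp add: natmul_add algebra_simps)
  then have "extend_character H \<chi> g z (x + y) = \<chi> (h1 + h2) * z ^ (k1 + k2)"
    using ext add_closed_add[OF H hk(1,2)] by simp
  also have "\<dots> = extend_character H \<chi> g z x * extend_character H \<chi> g z y"
    using hk \<chi> by (simp add: ext character_on_def power_add mult_ac)
  finally show "extend_character H \<chi> g z (x + y) = extend_character H \<chi> g z x * extend_character H \<chi> g z y" .
next
  have "z \<noteq> 0"
  proof
    assume "z = 0"
    then have "\<chi> (natmul (order_mod H g) g) = 0"
      using z order_mod_pos[OF H, of g] by (simp add: power_0_left)
    with \<chi> natmul_order_mod[OF H, of g] show False
      by (simp add: character_on_def)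
  qed
  fix x assume "x \<in> adjoin H g"
  with \<chi> \<open>z \<noteq> 0\<close> show "extend_character H \<chi> g z x \<noteq> 0"
    by (auto simp: adjoin_def extend_character_eq[OF H \<chi> z] character_on_def)
qed

lemma character_on_extends_to_dual_group:
  fixes \<chi> :: "'g::{ab_group_add,finite} \<Rightarrow> 'k::field alg_closure"
  assumes "add_closed H" "character_on H \<chi>"
  obtains \<chi>' where "\<chi>' \<in> dual_group" "\<forall>x\<in>H. \<chi>' x = \<chi> x"
  using assms
proof (induction "card (UNIV - H)" arbitrary: H \<chi> thesis rule: less_induct)
  case less
  show ?case
  proof (cases "H = UNIV")
    case True
    with less.prems show ?thesis
      by (auto simp: character_on_def dual_group_def)
  next
    case False
    then obtain g where g: "g \<notin> H"
      by auto
    obtain z where z: "z ^ order_mod H g = \<chi> (natmul (order_mod H g) g)"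
      using nth_root_exists[OF order_mod_pos[OF less.prems(2)]] by blast
    let ?H' = "adjoin H g" and ?\<chi>' = "extend_character H \<chi> g z"
    have "card (UNIV - ?H') < card (UNIV - H)"
      using insert_subset_adjoin[OF less.prems(2)] g by (intro psubset_card_mono) auto
    then obtain \<chi>'' where "\<chi>'' \<in> dual_group" "\<forall>x\<in>?H'. \<chi>'' x = ?\<chi>' x"
      using less.hyps add_closed_adjoin[OF less.prems(2)] character_on_adjoin[OF less.prems(2,3) z]
      by metis
    moreover have "\<forall>x\<in>H. ?\<chi>' x = \<chi> x"
      using extend_character_eq[OF less.prems(2,3) z, of _ 0] by simp
    ultimately show ?thesis
      using insert_subset_adjoin[OF less.prems(2), of g] by (intro less.prems(1)[of \<chi>'']) auto
  qed
qed

lemma exists_character_neq_1: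
  fixes x :: "'g::{ab_group_add,finite}"
  assumes coprime: "coprime CARD('g) CHAR('k)" and x: "x \<noteq> 0"
  obtains \<chi> :: "'g \<Rightarrow> 'k::field alg_closure" where "\<chi> \<in> dual_group" "\<chi> x \<noteq> 1"
proof -
  have H: "add_closed {0::'g}" and \<chi>: "character_on {0} (\<lambda>_. 1 :: 'k alg_closure)"
    by (simp_all add: add_closed_def character_on_def)
  define m where "m = order_mod {0} x"
  have "m \<noteq> 1"
    using natmul_order_mod[OF H, of x] x by (auto simp: m_def)
  then have m: "0 < m - 1" "Suc (m - 1) = m"
    using order_mod_pos[OF H, of x] by (simp_all add: m_def)
  have "m dvd CARD('g)"
    using order_mod_dvd[OF H, where g = x and j = "CARD('g)"] by (simp add: natmul_card m_def)
  then have "of_nat m \<noteq> (0 :: 'k alg_closure)"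
    using coprime by (intro of_nat_neq_0_if_coprime_CHAR) simp_all
  txt \<open>A root \<open>z \<noteq> 1\<close> of \<open>1 + z + \<dots> + z ^ (m - 1)\<close> is a nontrivial \<open>m\<close>-th root of unity.\<close>
  obtain z :: "'k alg_closure" where z: "(\<Sum>k\<le>m - 1. 1 * z ^ k) = 0"
    using alg_closed[of "m - 1" "\<lambda>_. 1"] m by auto
  then have "(\<Sum>k<m. z ^ k) = 0"
    using m by (simp add: lessThan_Suc_atMost[symmetric])
  with \<open>of_nat m \<noteq> 0\<close> have "z \<noteq> 1" "z ^ m = 1"
    using power_diff_1_eq[of z m] by auto
  then have root: "z ^ order_mod {0} x = (\<lambda>_. 1 :: 'k alg_closure) (natmul (order_mod {0} x) x)"
    by (simp add: m_def)
  obtain \<chi>' where "\<chi>' \<in> dual_group" "\<forall>y\<in>adjoin {0} x. \<chi>' y = extend_character {0} (\<lambda>_. 1) x z y"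
    using character_on_extends_to_dual_group[OF add_closed_adjoin[OF H] character_on_adjoin[OF H \<chi> root]] .
  moreover have "extend_character {0} (\<lambda>_. 1) x z x = z"
    using extend_character_eq[OF H \<chi> root, of 0 1] by simp
  ultimately show ?thesis
    using that insert_subset_adjoin[OF H, of x] \<open>z \<noteq> 1\<close> by auto
qed


section \<open>Fourier inversion\<close>

lemma sum_dual_group_neq_0:
  fixes x :: "'g::{ab_group_add,finite}"
  assumes coprime: "coprime CARD('g) CHAR('k::field)" and "x \<noteq> 0"
  shows "(\<Sum>\<chi>\<in>(dual_group :: ('g \<Rightarrow> 'k alg_closure) set). \<chi> x) = 0"
proof -
  let ?D = "dual_group :: ('g \<Rightarrow> 'k alg_closure) set"
  obtain \<chi>0 :: "'g \<Rightarrow> 'k alg_closure" where \<chi>0: "\<chi>0 \<in> dual_group" "\<chi>0 x \<noteq> 1"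
    using exists_character_neq_1[OF coprime \<open>x \<noteq> 0\<close>] by blast
  have inv: "\<chi>0 (-y) * \<chi>0 y = 1" "\<chi>0 y * \<chi>0 (-y) = 1" for y
    using character_uminus[OF \<chi>0(1), of y] by (simp_all add: mult.commute)
  have "(\<Sum>\<chi>\<in>?D. \<chi> x) = (\<Sum>\<chi>\<in>?D. \<chi>0 x * \<chi> x)"
  proof (rule sum.reindex_bij_witness[of _ "\<lambda>\<psi> y. \<chi>0 y * \<psi> y" "\<lambda>\<psi> y. \<chi>0 (-y) * \<psi> y"])
    fix \<psi> :: "'g \<Rightarrow> 'k alg_closure" assume \<psi>: "\<psi> \<in> ?D"
    show "(\<lambda>y. \<chi>0 y * (\<chi>0 (-y) * \<psi> y)) = \<psi>" "(\<lambda>y. \<chi>0 (-y) * (\<chi>0 y * \<psi> y)) = \<psi>"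
      by (simp_all add: mult.assoc[symmetric] inv)
    show "(\<lambda>y. \<chi>0 (-y) * \<psi> y) \<in> ?D" "(\<lambda>y. \<chi>0 y * \<psi> y) \<in> ?D"
      using \<psi> \<chi>0(1) by (simp_all add: dual_group_mult dual_group_uminus)
    show "\<chi>0 x * (\<chi>0 (-x) * \<psi> x) = \<psi> x"
      by (simp add: mult.assoc[symmetric] inv)
  qed
  also have "\<dots> = \<chi>0 x * (\<Sum>\<chi>\<in>?D. \<chi> x)"
    by (simp add: sum_distrib_left)
  finally have "(\<chi>0 x - 1) * (\<Sum>\<chi>\<in>?D. \<chi> x) = 0"
    by (simp add: algebra_simps)
  with \<chi>0(2) show ?thesis
    by simp
qed

lemma sum_dual_group:
  fixes x :: "'g::{ab_group_add,finite}"
  assumes coprime: "coprime CARD('g) CHAR('k::field)"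
  shows "(\<Sum>\<chi>\<in>(dual_group :: ('g \<Rightarrow> 'k alg_closure) set). \<chi> x) = (if x = 0 then of_nat CARD('g) else 0)"
proof -
  let ?D = "dual_group :: ('g \<Rightarrow> 'k alg_closure) set"
  have "of_nat (card ?D) = (\<Sum>y\<in>UNIV. \<Sum>\<chi>\<in>?D. \<chi> y)"
    using sum_dual_group_neq_0[OF coprime] by (simp add: sum.remove[of UNIV 0] character_zero)
  also have "\<dots> = (\<Sum>\<chi>\<in>?D. \<Sum>y\<in>UNIV. \<chi> y)"
    by (rule sum.swap)
  also have "\<dots> = (\<Sum>\<chi>\<in>?D. if \<chi> = (\<lambda>_. 1) then of_nat CARD('g) else 0)"
    by (simp add: sum_character)
  also have "\<dots> = of_nat CARD('g)"
    by (simp add: sum.delta' finite_dual_group one_in_dual_group)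
  finally show ?thesis
    using sum_dual_group_neq_0[OF coprime] by (simp add: character_zero)
qed

lemma fourier_inversion:
  fixes F :: "'g::{ab_group_add,finite} \<Rightarrow> 'k::field alg_closure"
  assumes "coprime CARD('g) CHAR('k)"
  shows "of_nat CARD('g) * F x = (\<Sum>\<chi>\<in>dual_group. conv F \<chi> x)"
proof -
  have "(\<Sum>\<chi>\<in>dual_group. conv F \<chi> x) = (\<Sum>h\<in>UNIV. F h * (\<Sum>\<chi>\<in>dual_group. \<chi> (x - h)))"
    unfolding conv_def by (simp add: sum_distrib_left) (rule sum.swap)
  also have "\<dots> = (\<Sum>h\<in>UNIV. if h = x then F x * of_nat CARD('g) else 0)"
    by (intro sum.cong) (auto simp: sum_dual_group[OF assms])
  also have "\<dots> = of_nat CARD('g) * F x"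
    by (simp add: mult.commute)
  finally show ?thesis
    by simp
qed


section \<open>Frobenius orbits and traces\<close>

lemma periodic_orbit_eq:
  assumes "s \<in> orbit f s" "t \<in> orbit f s"
  shows "orbit f t = orbit f s"
proof
  show "orbit f t \<subseteq> orbit f s"
    using orbit_trans[OF _ assms(2)] by blast
  show "orbit f s \<subseteq> orbit f t"
    using orbit_trans[OF _ orbit_swap[OF assms]] by blast
qed

lemma periodic_orbits_disjoint:
  assumes "s \<in> orbit f s" "t \<in> orbit f t" "orbit f s \<noteq> orbit f t"
  shows "orbit f s \<inter> orbit f t = {}"
proof (rule ccontr)
  assume "orbit f s \<inter> orbit f t \<noteq> {}"
  then obtain u where "u \<in> orbit f s" "u \<in> orbit f t"
    by blast
  then have "orbit f s = orbit f u" "orbit f u = orbit f t"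
    using periodic_orbit_eq assms(1,2) by metis+
  with assms(3) show False
    by simp
qed

lemma funpow_Dq: "(Dq ^^ n) f = (\<lambda>x. f x ^ (CARD('k) ^ n))"
  for f :: "'g \<Rightarrow> 'k::{field,finite} alg_closure"
  by (induction n) (simp_all add: Dq_def power_mult[symmetric] mult.commute)

lemma Dq_orbit_eq_orbit: "f \<in> orbit Dq f \<Longrightarrow> Dq_orbit f = orbit Dq f"
  unfolding Dq_orbit_def by (rule orbit_altdef_self_in[symmetric])

lemma self_in_Dq_orbit: "f \<in> Dq_orbit f"
  by (auto simp: Dq_orbit_def intro: exI[of _ 0])

lemma rdeg_eq_funpow_dist1:
  fixes f :: "'g::finite \<Rightarrow> 'k::{field,finite} alg_closure"
  assumes "f \<in> orbit Dq f"
  shows "rdeg f = funpow_dist1 Dq f f"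
proof -
  obtain n where n: "0 < n" "(Dq ^^ n) f = f"
    using assms by (auto simp: orbit_altdef)
  have "rdeg f = (LEAST n. 1 \<le> n \<and> (Dq ^^ n) f = f)"
    by (simp add: rdeg_def funpow_Dq fun_eq_iff)
  also have "\<dots> = Suc (LEAST m. (Dq ^^ Suc m) f = f)"
    using Least_Suc[of "\<lambda>n. 1 \<le> n \<and> (Dq ^^ n) f = f" n] n by simp
  also have "\<dots> = funpow_dist1 Dq f f"
    by (simp add: funpow_dist_def funpow_swap1)
  finally show ?thesis .
qed

lemma funpow_Dq_rdeg:
  fixes f :: "'g::finite \<Rightarrow> 'k::{field,finite} alg_closure"
  assumes "f \<in> orbit Dq f"
  shows "(Dq ^^ rdeg f) f = f"
  using funpow_dist1_prop[OF assms] by (simp add: rdeg_eq_funpow_dist1[OF assms])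

lemma Tr_eq_sum_orbit:
  fixes f :: "'g::finite \<Rightarrow> 'k::{field,finite} alg_closure"
  assumes "f \<in> orbit Dq f"
  shows "Tr f = (\<lambda>x. \<Sum>\<phi>\<in>orbit Dq f. \<phi> x)"
proof
  fix x
  have "orbit Dq f = (\<lambda>n. (Dq ^^ n) f) ` {..<rdeg f}"
    using orbit_conv_funpow_dist1[OF assms] by (simp add: rdeg_eq_funpow_dist1[OF assms] atLeast0LessThan)
  moreover have "inj_on (\<lambda>n. (Dq ^^ n) f) {..<rdeg f}"
    using inj_on_funpow_dist1[OF assms] by (simp add: rdeg_eq_funpow_dist1[OF assms] atLeast0LessThan)
  ultimately show "Tr f x = (\<Sum>\<phi>\<in>orbit Dq f. \<phi> x)"
    by (simp add: sum.reindex Tr_def funpow_Dq)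
qed

lemma Tr_power_card:
  fixes f :: "'g::finite \<Rightarrow> 'k::{field,finite} alg_closure"
  assumes "f \<in> orbit Dq f"
  shows "Tr f x ^ CARD('k) = Tr f x"
proof -
  let ?r = "rdeg f" and ?c = "\<lambda>i. f x ^ (CARD('k) ^ i)"
  have "?c ?r = ?c 0"
    using fun_cong[OF funpow_Dq_rdeg[OF assms], of x] by (simp add: funpow_Dq)
  then have shift: "(\<Sum>i<?r. ?c (Suc i)) = (\<Sum>i<?r. ?c i)"
    using sum.lessThan_Suc_shift[of ?c ?r] by (simp add: add.commute)
  have "Tr f x ^ CARD('k) = (\<Sum>i<?r. ?c i ^ (CARD('k) ^ 1))"
    using frobenius_sum[of ?c "{..<?r}" 1] by (simp add: Tr_def)
  also have "\<dots> = (\<Sum>i<?r. ?c (Suc i))"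
    by (simp add: power_mult[symmetric] mult.commute)
  also have "\<dots> = (\<Sum>i<?r. ?c i)"
    by (rule shift)
  finally show ?thesis
    by (simp add: Tr_def)
qed

lemma Tr_in_range_to_ac: "f \<in> orbit Dq f \<Longrightarrow> Tr f x \<in> range to_ac"
  by (rule frobenius_fixed_in_range_to_ac) (rule Tr_power_card)

lemma to_ac_TrK: "f \<in> orbit Dq f \<Longrightarrow> to_ac (TrK f x) = Tr f x"
  by (simp add: TrK_def to_ac_of_ac Tr_in_range_to_ac)

lemma power_eq_if_cong:
  fixes y :: "'a::comm_monoid_mult"
  assumes "y ^ n = 1" "[a = b] (mod n)"
  shows "y ^ a = y ^ b"
proof -
  have "y ^ c = y ^ (c mod n)" for c
  proof -
    have "y ^ c = (y ^ n) ^ (c div n) * y ^ (c mod n)"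
      by (simp flip: power_mult power_add)
    with assms(1) show ?thesis
      by simp
  qed
  with assms(2) show ?thesis
    unfolding cong_def by metis
qed

lemma character_in_orbit_Dq:
  fixes \<chi> :: "'g::{ab_group_add,finite} \<Rightarrow> 'k::{field,finite} alg_closure"
  assumes coprime: "coprime CARD('g) CHAR('k)" and \<chi>: "\<chi> \<in> dual_group"
  shows "\<chi> \<in> orbit Dq \<chi>"
proof -
  obtain e where "CARD('k) = CHAR('k) ^ e"
    using card_finite_field_prime_power by blast
  with coprime have "coprime CARD('k) CARD('g)"
    by (simp add: coprime_commute)
  then have "[CARD('k) ^ totient CARD('g) = 1] (mod CARD('g))"
    by (rule euler_theorem)
  then have "(Dq ^^ totient CARD('g)) \<chi> = \<chi>"
    using power_eq_if_cong[OF character_power_card[OF \<chi>]] by (simp add: funpow_Dq)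
  then show ?thesis
    by (auto simp: orbit_altdef intro!: exI[of _ "totient CARD('g)"])
qed

lemma Dq_orbit_character:
  fixes \<chi> :: "'g::{ab_group_add,finite} \<Rightarrow> 'k::{field,finite} alg_closure"
  shows "coprime CARD('g) CHAR('k) \<Longrightarrow> \<chi> \<in> dual_group \<Longrightarrow> Dq_orbit \<chi> = orbit Dq \<chi>"
  by (simp add: Dq_orbit_eq_orbit character_in_orbit_Dq)

lemma orbit_Dq_subset_dual_group: "\<chi> \<in> dual_group \<Longrightarrow> orbit Dq \<chi> \<subseteq> dual_group"
  by (auto simp: orbit_altdef funpow_Dq dual_group_power)


section \<open>Harmonic characters and their traces\<close>

lemma Dq_in_harmonic_chars:
  fixes a :: "nat \<Rightarrow> 'g::{ab_group_add,finite} \<Rightarrow> 'k::{field,finite}"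
  assumes "\<chi> \<in> harmonic_chars t a"
  shows "Dq \<chi> \<in> harmonic_chars t a"
proof -
  have \<chi>: "\<chi> \<in> dual_group"
    using assms by (simp add: harmonic_chars_def)
  have "conv (Dq \<chi>) (\<lambda>x. to_ac (a j x)) = (\<lambda>_. 0)" if "j < t" for j
  proof
    fix x
    have "conv (Dq \<chi>) (\<lambda>x. to_ac (a j x)) x = (\<Sum>h\<in>UNIV. (\<chi> h * to_ac (a j (x - h))) ^ CARD('k) ^ 1)"
      by (simp add: conv_def Dq_def power_mult_distrib finite_field_power_card flip: to_ac_power)
    also have "\<dots> = conv \<chi> (\<lambda>x. to_ac (a j x)) x ^ CARD('k) ^ 1"
      unfolding conv_def by (rule frobenius_sum[symmetric])
    also have "\<dots> = 0"
      using assms that by (simp add: harmonic_chars_def harmonic_def)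
    finally show "conv (Dq \<chi>) (\<lambda>x. to_ac (a j x)) x = 0" .
  qed
  moreover have "Dq \<chi> \<in> dual_group"
    using dual_group_power[OF \<chi>] by (simp add: Dq_def)
  ultimately show ?thesis
    by (simp add: harmonic_chars_def harmonic_def)
qed

lemma orbit_Dq_subset_harmonic_chars:
  fixes a :: "nat \<Rightarrow> 'g::{ab_group_add,finite} \<Rightarrow> 'k::{field,finite}"
  assumes "\<chi> \<in> harmonic_chars t a"
  shows "orbit Dq \<chi> \<subseteq> harmonic_chars t a"
proof
  fix \<psi> assume "\<psi> \<in> orbit Dq \<chi>"
  then show "\<psi> \<in> harmonic_chars t a"
    by induction (simp_all add: Dq_in_harmonic_chars assms)
qed

lemma conv_character_Tr:
  fixes \<chi> \<psi> :: "'g::{ab_group_add,finite} \<Rightarrow> 'k::{field,finite} alg_closure"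
  assumes coprime: "coprime CARD('g) CHAR('k)" and \<chi>: "\<chi> \<in> dual_group" and \<psi>: "\<psi> \<in> dual_group"
  shows "conv \<chi> (Tr \<psi>) = (if \<chi> \<in> Dq_orbit \<psi> then (\<lambda>x. of_nat CARD('g) * \<chi> x) else (\<lambda>_. 0))"
proof -
  note periodic = character_in_orbit_Dq[OF coprime \<psi>]
  have "conv \<chi> (Tr \<psi>) = (\<lambda>x. \<Sum>\<phi>\<in>orbit Dq \<psi>. conv \<chi> \<phi> x)"
    by (simp add: Tr_eq_sum_orbit[OF periodic] conv_sum_right)
  also have "\<dots> = (\<lambda>x. \<Sum>\<phi>\<in>orbit Dq \<psi>. if \<chi> = \<phi> then of_nat CARD('g) * \<chi> x else 0)"
    using orbit_Dq_subset_dual_group[OF \<psi>]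
    by (intro ext sum.cong) (auto simp: conv_characters[OF \<chi>])
  also have "\<dots> = (if \<chi> \<in> Dq_orbit \<psi> then (\<lambda>x. of_nat CARD('g) * \<chi> x) else (\<lambda>_. 0))"
    using finite_orbit[OF periodic] by (simp add: Dq_orbit_character[OF coprime \<psi>] sum.delta')
  finally show ?thesis .
qed

lemma conv_Tr_Tr:
  fixes \<chi> \<psi> :: "'g::{ab_group_add,finite} \<Rightarrow> 'k::{field,finite} alg_closure"
  assumes coprime: "coprime CARD('g) CHAR('k)" and \<chi>: "\<chi> \<in> dual_group" and \<psi>: "\<psi> \<in> dual_group"
  shows "conv (Tr \<chi>) (Tr \<psi>)
    = (if Dq_orbit \<chi> = Dq_orbit \<psi> then (\<lambda>x. of_nat CARD('g) * Tr \<chi> x) else (\<lambda>_. 0))"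
proof -
  note periodic = character_in_orbit_Dq[OF coprime \<chi>] character_in_orbit_Dq[OF coprime \<psi>]
  have "conv (Tr \<chi>) (Tr \<psi>) = (\<lambda>x. \<Sum>\<phi>\<in>orbit Dq \<chi>. conv \<phi> (Tr \<psi>) x)"
    by (simp add: Tr_eq_sum_orbit[OF periodic(1)] conv_sum_left)
  also have "\<dots> = (\<lambda>x. \<Sum>\<phi>\<in>orbit Dq \<chi>. if \<phi> \<in> orbit Dq \<psi> then of_nat CARD('g) * \<phi> x else 0)"
    using orbit_Dq_subset_dual_group[OF \<chi>]
    by (intro ext sum.cong) (auto simp: conv_character_Tr[OF coprime _ \<psi>] Dq_orbit_character[OF coprime \<psi>])
  also have "\<dots> = (if Dq_orbit \<chi> = Dq_orbit \<psi> then (\<lambda>x. of_nat CARD('g) * Tr \<chi> x) else (\<lambda>_. 0))"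
  proof (cases "orbit Dq \<chi> = orbit Dq \<psi>")
    case True
    then show ?thesis
      by (simp add: Dq_orbit_character coprime \<chi> \<psi> Tr_eq_sum_orbit[OF periodic(1)] sum_distrib_left)
  next
    case False
    then have "orbit Dq \<chi> \<inter> orbit Dq \<psi> = {}"
      by (rule periodic_orbits_disjoint[OF periodic])
    then have "(\<lambda>x. \<Sum>\<phi>\<in>orbit Dq \<chi>. if \<phi> \<in> orbit Dq \<psi> then of_nat CARD('g) * \<phi> x else 0) = (\<lambda>_. 0)"
      by (intro ext sum.neutral) auto
    with False show ?thesis
      by (simp add: Dq_orbit_character coprime \<chi> \<psi>)
  qed
  finally show ?thesis .
qed

lemma Tr_eq_iff_Dq_orbit_eq:
  fixes \<chi> \<psi> :: "'g::{ab_group_add,finite} \<Rightarrow> 'k::{field,finite} alg_closure"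
  assumes coprime: "coprime CARD('g) CHAR('k)" and \<chi>: "\<chi> \<in> dual_group" and \<psi>: "\<psi> \<in> dual_group"
  shows "Tr \<chi> = Tr \<psi> \<longleftrightarrow> Dq_orbit \<chi> = Dq_orbit \<psi>"
proof
  assume Tr: "Tr \<chi> = Tr \<psi>"
  have "of_nat CARD('g) \<noteq> (0 :: 'k alg_closure)"
    by (rule of_nat_card_alg_closure_neq_0[OF coprime])
  then have "conv \<chi> (Tr \<chi>) 0 \<noteq> 0"
    using character_in_orbit_Dq[OF coprime \<chi>] character_nonzero[OF \<chi>]
    by (simp add: conv_character_Tr[OF coprime \<chi> \<chi>] Dq_orbit_character[OF coprime \<chi>])
  then have "\<chi> \<in> orbit Dq \<psi>"
    using Tr by (simp add: conv_character_Tr[OF coprime \<chi> \<psi>] Dq_orbit_character[OF coprime \<psi>]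
        split: if_splits)
  then show "Dq_orbit \<chi> = Dq_orbit \<psi>"
    using periodic_orbit_eq character_in_orbit_Dq[OF coprime \<psi>]
    by (simp add: Dq_orbit_character coprime \<chi> \<psi>)
next
  assume "Dq_orbit \<chi> = Dq_orbit \<psi>"
  then have "orbit Dq \<chi> = orbit Dq \<psi>"
    by (simp add: Dq_orbit_character coprime \<chi> \<psi>)
  then show "Tr \<chi> = Tr \<psi>"
    using Tr_eq_sum_orbit[OF character_in_orbit_Dq[OF coprime \<chi>]]
      Tr_eq_sum_orbit[OF character_in_orbit_Dq[OF coprime \<psi>]] by simp
qed

lemma Dq_orbits_bij_betw_traces:
  fixes S :: "('g::{ab_group_add,finite} \<Rightarrow> 'k::{field,finite} alg_closure) set"
  assumes coprime: "coprime CARD('g) CHAR('k)" and S: "S \<subseteq> dual_group"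
  shows "\<exists>\<phi>. bij_betw \<phi> (Dq_orbit ` S) (Tr ` S) \<and> (\<forall>\<chi>\<in>S. \<phi> (Dq_orbit \<chi>) = Tr \<chi>)"
proof -
  define \<phi> where "\<phi> C = Tr (SOME \<chi>. \<chi> \<in> C)" for C :: "('g \<Rightarrow> 'k alg_closure) set"
  have \<phi>: "\<phi> (Dq_orbit \<chi>) = Tr \<chi>" if "\<chi> \<in> S" for \<chi>
  proof -
    have \<chi>: "\<chi> \<in> dual_group" "Dq_orbit \<chi> = orbit Dq \<chi>"
      using S that Dq_orbit_character[OF coprime] by auto
    define \<psi> where "\<psi> = (SOME \<psi>. \<psi> \<in> Dq_orbit \<chi>)"
    have \<psi>: "\<psi> \<in> orbit Dq \<chi>"
      unfolding \<psi>_def \<chi>(2)[symmetric]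
      using someI[of "\<lambda>\<psi>. \<psi> \<in> Dq_orbit \<chi>", OF self_in_Dq_orbit] .
    then have "\<psi> \<in> dual_group"
      using orbit_Dq_subset_dual_group[OF \<chi>(1)] by blast
    moreover have "orbit Dq \<psi> = orbit Dq \<chi>"
      using periodic_orbit_eq[OF character_in_orbit_Dq[OF coprime \<chi>(1)] \<psi>] .
    ultimately have "Tr \<psi> = Tr \<chi>"
      using Tr_eq_iff_Dq_orbit_eq[OF coprime _ \<chi>(1)] by (simp add: Dq_orbit_character[OF coprime] \<chi>)
    then show ?thesis
      by (simp add: \<phi>_def \<psi>_def)
  qed
  have "inj_on \<phi> (Dq_orbit ` S)"
  proof (rule inj_onI, clarify)
    fix \<chi> \<psi> assume "\<chi> \<in> S" "\<psi> \<in> S" "\<phi> (Dq_orbit \<chi>) = \<phi> (Dq_orbit \<psi>)"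
    then show "Dq_orbit \<chi> = Dq_orbit \<psi>"
      using \<phi> Tr_eq_iff_Dq_orbit_eq[OF coprime] S by auto
  qed
  moreover have "\<phi> ` Dq_orbit ` S = Tr ` S"
    using \<phi> by (simp add: image_image)
  ultimately show ?thesis
    using \<phi> by (auto simp: bij_betw_def)
qed

lemma character_eq_Tr_average:
  fixes \<chi> :: "'g::{ab_group_add,finite} \<Rightarrow> 'k::{field,finite} alg_closure"
  assumes coprime: "coprime CARD('g) CHAR('k)" and \<chi>: "\<chi> \<in> dual_group"
  shows "\<chi> = (\<lambda>x. (\<Sum>g\<in>UNIV. \<chi> (- g) * Tr \<chi> (g + x)) / of_nat CARD('g))"
proof
  fix x
  have "of_nat CARD('g) \<noteq> (0 :: 'k alg_closure)"
    by (rule of_nat_card_alg_closure_neq_0[OF coprime])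
  have "(\<Sum>g\<in>UNIV. \<chi> (- g) * Tr \<chi> (g + x)) = conv \<chi> (Tr \<chi>) x"
    unfolding conv_def by (rule sum.reindex_bij_witness[of _ uminus uminus]) (simp_all add: add.commute)
  also have "\<dots> = of_nat CARD('g) * \<chi> x"
    by (simp add: conv_character_Tr[OF coprime \<chi> \<chi>] self_in_Dq_orbit)
  finally show "\<chi> x = (\<Sum>g\<in>UNIV. \<chi> (- g) * Tr \<chi> (g + x)) / of_nat CARD('g)"
    using \<open>of_nat CARD('g) \<noteq> 0\<close> by simp
qed

lemma conv_TrK_TrK:
  fixes \<chi> \<psi> :: "'g::{ab_group_add,finite} \<Rightarrow> 'k::{field,finite} alg_closure"
  assumes coprime: "coprime CARD('g) CHAR('k)" and \<chi>: "\<chi> \<in> dual_group" and \<psi>: "\<psi> \<in> dual_group"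
  shows "conv (TrK \<chi>) (TrK \<psi>)
    = (if Dq_orbit \<chi> = Dq_orbit \<psi> then (\<lambda>x. of_nat CARD('g) * TrK \<chi> x) else (\<lambda>_. 0))"
proof
  fix x
  have "to_ac (conv (TrK \<chi>) (TrK \<psi>) x)
      = to_ac ((if Dq_orbit \<chi> = Dq_orbit \<psi> then (\<lambda>x. of_nat CARD('g) * TrK \<chi> x) else (\<lambda>_. 0)) x)"
    using to_ac_TrK[OF character_in_orbit_Dq[OF coprime \<chi>]] to_ac_TrK[OF character_in_orbit_Dq[OF coprime \<psi>]]
    by (simp add: to_ac_conv conv_Tr_Tr[OF coprime \<chi> \<psi>])
  then show "conv (TrK \<chi>) (TrK \<psi>) x
      = (if Dq_orbit \<chi> = Dq_orbit \<psi> then (\<lambda>x. of_nat CARD('g) * TrK \<chi> x) else (\<lambda>_. 0)) x"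
    by (simp only: to_ac_eq_iff)
qed

lemma conv_TrK_eq_0_if_harmonic:
  fixes a :: "nat \<Rightarrow> 'g::{ab_group_add,finite} \<Rightarrow> 'k::{field,finite}"
  assumes coprime: "coprime CARD('g) CHAR('k)" and \<chi>: "\<chi> \<in> harmonic_chars t a" and j: "j < t"
  shows "conv (TrK \<chi>) (a j) = (\<lambda>_. 0)"
proof
  fix x
  have periodic: "\<chi> \<in> orbit Dq \<chi>"
    using \<chi> character_in_orbit_Dq[OF coprime] by (simp add: harmonic_chars_def)
  have "to_ac (conv (TrK \<chi>) (a j) x) = (\<Sum>\<phi>\<in>orbit Dq \<chi>. conv \<phi> (\<lambda>y. to_ac (a j y)) x)"
    by (simp add: to_ac_conv to_ac_TrK[OF periodic] Tr_eq_sum_orbit[OF periodic] conv_sum_left)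
  also have "\<dots> = 0"
    using orbit_Dq_subset_harmonic_chars[OF \<chi>] j
    by (intro sum.neutral) (force simp: harmonic_chars_def harmonic_def)
  finally show "conv (TrK \<chi>) (a j) x = 0"
    by simp
qed

lemma conv_ideal_TrK_subset_ker_Delta:
  fixes a :: "nat \<Rightarrow> 'g::{ab_group_add,finite} \<Rightarrow> 'k::{field,finite}"
  assumes coprime: "coprime CARD('g) CHAR('k)" and \<chi>: "\<chi> \<in> harmonic_chars t a"
  shows "conv_ideal (TrK \<chi>) \<subseteq> ker_Delta t a"
proof
  fix f assume "f \<in> conv_ideal (TrK \<chi>)"
  then obtain u where f: "f = conv (TrK \<chi>) u"
    by (auto simp: conv_ideal_def)
  have "conv f (a j) = conv u (conv (TrK \<chi>) (a j))" for j
    using conv_commute[of "TrK \<chi>" u] by (simp add: f conv_assoc)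
  then show "f \<in> ker_Delta t a"
    by (simp add: ker_Delta_def conv_TrK_eq_0_if_harmonic[OF coprime \<chi>])
qed

text \<open>\<open>\<chi>\<close> is an eigenvector of convolution by each \<open>a j\<close>, and for a non-harmonic \<open>\<chi>\<close> one of
  the eigenvalues is nonzero.\<close>
lemma conv_character_eq_0_if_not_harmonic:
  fixes a :: "nat \<Rightarrow> 'g::{ab_group_add,finite} \<Rightarrow> 'k::field"
  assumes \<chi>: "\<chi> \<in> dual_group" "\<chi> \<notin> harmonic_chars t a" and f: "f \<in> ker_Delta t a"
  shows "conv (\<lambda>y. to_ac (f y)) \<chi> = (\<lambda>_. 0)"
proof -
  obtain j where j: "j < t" and nz: "conv \<chi> (\<lambda>x. to_ac (a j x)) \<noteq> (\<lambda>_. 0)"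
    using \<chi> by (auto simp: harmonic_chars_def harmonic_def)
  let ?A = "\<lambda>x. to_ac (a j x)" and ?F = "\<lambda>y. to_ac (f y)"
  define c where "c = (\<Sum>h\<in>UNIV. ?A h * \<chi> (-h))"
  have A: "conv ?A \<chi> = (\<lambda>x. c * \<chi> x)"
    unfolding c_def by (rule conv_character[OF \<chi>(1)])
  with nz have "c \<noteq> 0"
    by (auto simp: conv_commute[of \<chi>])
  have "conv ?F ?A = (\<lambda>_. 0)"
  proof
    fix x
    have "conv f (a j) x = 0"
      using f j by (simp add: ker_Delta_def)
    then show "conv ?F ?A x = 0"
      using to_ac_conv[of f "a j" x] by simp
  qed
  then have "(\<lambda>_. 0) = conv ?F (\<lambda>x. c * \<chi> x)"
    by (simp flip: A conv_assoc)
  also have "\<dots> = (\<lambda>x. c * conv ?F \<chi> x)"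
    by (simp add: conv_commute[of ?F] conv_mult_left)
  finally show ?thesis
    using \<open>c \<noteq> 0\<close> by (simp add: fun_eq_iff)
qed


lemma conv_conv_ideal_eq_0:
  assumes "conv e1 e2 = (\<lambda>_. 0)" "f1 \<in> conv_ideal e1" "f2 \<in> conv_ideal e2"
  shows "conv f1 f2 = (\<lambda>_. 0)"
proof -
  obtain u v where f1: "f1 = conv e1 u" and f2: "f2 = conv e2 v"
    using assms(2,3) by (auto simp: conv_ideal_def)
  have "conv f1 f2 = conv e1 (conv (conv u e2) v)"
    by (simp add: f1 f2 conv_assoc)
  also have "\<dots> = conv (conv e1 e2) (conv u v)"
    by (simp add: conv_commute[of u e2] conv_assoc)
  finally show ?thesis
    by (simp add: assms(1))
qed

lemma ip1_eq_0_if_conv_eq_0: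
  assumes "conv f1 f2 = (\<lambda>_. 0)"
  shows "ip1 f1 f2 = 0"
proof -
  have "conv f1 f2 0 = 0"
    by (simp add: assms)
  then show ?thesis
    by (simp add: ip1_def conv_def)
qed

lemma conv_ideal_sum_eq_0:
  fixes e f :: "nat \<Rightarrow> 'g::{ab_group_add,finite} \<Rightarrow> 'k::field"
  assumes e: "\<And>i j. i < m \<Longrightarrow> j < m \<Longrightarrow> conv (e i) (e j) = (if i = j then (\<lambda>x. c * e i x) else (\<lambda>_. 0))"
    and "c \<noteq> 0" and f: "\<And>i. i < m \<Longrightarrow> f i \<in> conv_ideal (e i)"
    and sum: "(\<lambda>x. \<Sum>i<m. f i x) = (\<lambda>_. 0)" and i: "i < m"
  shows "f i = (\<lambda>_. 0)"
proof
  fix x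
  have ef: "conv (e i) (f j) x = (if i = j then c * f i x else 0)" if j: "j < m" for j
  proof -
    obtain u where u: "f j = conv (e j) u"
      using f[OF j] by (auto simp: conv_ideal_def)
    then have "conv (e i) (f j) = conv (conv (e i) (e j)) u"
      by (simp add: conv_assoc)
    then show ?thesis
      using e[OF i j] u by (simp add: conv_mult_left)
  qed
  have "0 = conv (e i) (\<lambda>x. \<Sum>j<m. f j x) x"
    by (simp add: sum)
  also have "\<dots> = c * f i x"
    using i by (simp add: conv_sum_right ef)
  finally show "f i x = 0"
    using \<open>c \<noteq> 0\<close> by simp
qed


section \<open>Decomposition of the kernel\<close>

lemma harmonic_chars_eq_UN_orbits:
  fixes a :: "nat \<Rightarrow> 'g::{ab_group_add,finite} \<Rightarrow> 'k::{field,finite}" and m :: nat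
  assumes coprime: "coprime CARD('g) CHAR('k)"
    and reps: "\<forall>i<m. reps i \<in> harmonic_chars t a"
      "Dq_orbit ` reps ` {..<m} = Dq_orbit ` harmonic_chars t a"
  shows "harmonic_chars t a = (\<Union>i<m. orbit Dq (reps i))"
proof -
  let ?H = "harmonic_chars t a"
  have orbit: "Dq_orbit \<chi> = orbit Dq \<chi>" if "\<chi> \<in> ?H" for \<chi>
    using that Dq_orbit_character[OF coprime] by (simp add: harmonic_chars_def)
  have "?H = \<Union>(Dq_orbit ` ?H)"
  proof
    show "?H \<subseteq> \<Union>(Dq_orbit ` ?H)"
      using self_in_Dq_orbit by blast
    show "\<Union>(Dq_orbit ` ?H) \<subseteq> ?H"
      using orbit orbit_Dq_subset_harmonic_chars by blast
  qed
  also have "\<dots> = \<Union>(Dq_orbit ` reps ` {..<m})"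
    by (simp only: reps(2))
  also have "\<dots> = (\<Union>i<m. orbit Dq (reps i))"
    unfolding image_image using reps(1) orbit by (intro SUP_cong) auto
  finally show ?thesis .
qed

lemma ker_Delta_fourier_inversion:
  fixes a :: "nat \<Rightarrow> 'g::{ab_group_add,finite} \<Rightarrow> 'k::{field,finite}" and m :: nat
  assumes coprime: "coprime CARD('g) CHAR('k)"
    and reps: "\<forall>i<m. reps i \<in> harmonic_chars t a"
      "Dq_orbit ` reps ` {..<m} = Dq_orbit ` harmonic_chars t a"
      "\<forall>i<m. \<forall>j<m. i \<noteq> j \<longrightarrow> Dq_orbit (reps i) \<noteq> Dq_orbit (reps j)"
    and f: "f \<in> ker_Delta t a"
  shows "of_nat CARD('g) * to_ac (f x) = (\<Sum>i<m. conv (\<lambda>y. to_ac (f y)) (Tr (reps i)) x)"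
proof -
  let ?F = "\<lambda>y. to_ac (f y)"
  have rep: "reps i \<in> dual_group" "reps i \<in> orbit Dq (reps i)" if "i < m" for i
    using reps(1) that character_in_orbit_Dq[OF coprime] by (auto simp: harmonic_chars_def)
  have orbit_rep: "Dq_orbit (reps i) = orbit Dq (reps i)" if "i < m" for i
    using rep(1)[OF that] by (rule Dq_orbit_character[OF coprime])
  have "of_nat CARD('g) * ?F x = (\<Sum>\<chi>\<in>dual_group. conv ?F \<chi> x)"
    by (rule fourier_inversion[OF coprime])
  also have "\<dots> = (\<Sum>\<chi>\<in>harmonic_chars t a. conv ?F \<chi> x)"
  proof (rule sum.mono_neutral_right[OF finite_dual_group])
    show "harmonic_chars t a \<subseteq> dual_group"
      by (auto simp: harmonic_chars_def)
    show "\<forall>\<chi>\<in>dual_group - harmonic_chars t a. conv ?F \<chi> x = 0"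
      by (simp add: conv_character_eq_0_if_not_harmonic[OF _ _ f])
  qed
  also have "\<dots> = (\<Sum>i<m. \<Sum>\<chi>\<in>orbit Dq (reps i). conv ?F \<chi> x)"
    unfolding harmonic_chars_eq_UN_orbits[OF coprime reps(1,2)]
  proof (rule sum.UNION_disjoint)
    show "\<forall>i\<in>{..<m}. finite (orbit Dq (reps i))"
      using rep(2) by (simp add: finite_orbit)
    show "\<forall>i\<in>{..<m}. \<forall>j\<in>{..<m}. i \<noteq> j \<longrightarrow> orbit Dq (reps i) \<inter> orbit Dq (reps j) = {}"
    proof (intro ballI impI)
      fix i j assume ij: "i \<in> {..<m}" "j \<in> {..<m}" "i \<noteq> j"
      then have "orbit Dq (reps i) \<noteq> orbit Dq (reps j)"
        using reps(3) by (metis orbit_rep lessThan_iff)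
      with ij show "orbit Dq (reps i) \<inter> orbit Dq (reps j) = {}"
        using rep(2) by (intro periodic_orbits_disjoint) simp_all
    qed
  qed simp
  also have "\<dots> = (\<Sum>i<m. conv ?F (Tr (reps i)) x)"
  proof (rule sum.cong[OF refl])
    fix i assume "i \<in> {..<m}"
    then show "(\<Sum>\<chi>\<in>orbit Dq (reps i). conv ?F \<chi> x) = conv ?F (Tr (reps i)) x"
      using Tr_eq_sum_orbit[OF rep(2), of i] by (simp add: conv_sum_right)
  qed
  finally show ?thesis .
qed

lemma ker_Delta_eq_sum_conv_TrK:
  fixes a :: "nat \<Rightarrow> 'g::{ab_group_add,finite} \<Rightarrow> 'k::{field,finite}" and m :: nat
  assumes coprime: "coprime CARD('g) CHAR('k)"
    and reps: "\<forall>i<m. reps i \<in> harmonic_chars t a"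
      "Dq_orbit ` reps ` {..<m} = Dq_orbit ` harmonic_chars t a"
      "\<forall>i<m. \<forall>j<m. i \<noteq> j \<longrightarrow> Dq_orbit (reps i) \<noteq> Dq_orbit (reps j)"
    and f: "f \<in> ker_Delta t a"
  shows "f = (\<lambda>x. \<Sum>i<m. conv (TrK (reps i)) (\<lambda>y. f y / of_nat CARD('g)) x)"
proof
  fix x
  let ?N = "of_nat CARD('g) :: 'k alg_closure"
  have "?N \<noteq> 0"
    by (rule of_nat_card_alg_closure_neq_0[OF coprime])
  have "to_ac (\<Sum>i<m. conv (TrK (reps i)) (\<lambda>y. f y / of_nat CARD('g)) x)
      = (\<Sum>i<m. conv (Tr (reps i)) (\<lambda>y. inverse ?N * to_ac (f y)) x)"
    using reps(1) character_in_orbit_Dq[OF coprime]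
    by (auto simp: to_ac_sum to_ac_conv to_ac_TrK harmonic_chars_def divide_inverse_commute
        intro!: sum.cong)
  also have "\<dots> = inverse ?N * (?N * to_ac (f x))"
    by (simp add: conv_commute[of "Tr _"] conv_mult_left sum_distrib_left
        ker_Delta_fourier_inversion[OF coprime reps f])
  also have "\<dots> = to_ac (f x)"
    using \<open>?N \<noteq> 0\<close> by simp
  finally show "f x = (\<Sum>i<m. conv (TrK (reps i)) (\<lambda>y. f y / of_nat CARD('g)) x)"
    by simp
qed

lemma ker_Delta_eq_sum_conv_ideals:
  fixes a :: "nat \<Rightarrow> 'g::{ab_group_add,finite} \<Rightarrow> 'k::{field,finite}" and m :: nat
  assumes coprime: "coprime CARD('g) CHAR('k)"
    and reps: "\<forall>i<m. reps i \<in> harmonic_chars t a"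
      "Dq_orbit ` reps ` {..<m} = Dq_orbit ` harmonic_chars t a"
      "\<forall>i<m. \<forall>j<m. i \<noteq> j \<longrightarrow> Dq_orbit (reps i) \<noteq> Dq_orbit (reps j)"
  shows "ker_Delta t a = {(\<lambda>x. \<Sum>i<m. f i x) | f. \<forall>i<m. f i \<in> conv_ideal (TrK (reps i))}"
proof
  show "ker_Delta t a \<subseteq> {(\<lambda>x. \<Sum>i<m. f i x) | f. \<forall>i<m. f i \<in> conv_ideal (TrK (reps i))}"
  proof
    fix f assume "f \<in> ker_Delta t a"
    then have "f = (\<lambda>x. \<Sum>i<m. conv (TrK (reps i)) (\<lambda>y. f y / of_nat CARD('g)) x)"
      by (rule ker_Delta_eq_sum_conv_TrK[OF coprime reps])
    then show "f \<in> {(\<lambda>x. \<Sum>i<m. f i x) | f. \<forall>i<m. f i \<in> conv_ideal (TrK (reps i))}"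
      by (auto simp: conv_ideal_def)
  qed
  show "{(\<lambda>x. \<Sum>i<m. f i x) | f. \<forall>i<m. f i \<in> conv_ideal (TrK (reps i))} \<subseteq> ker_Delta t a"
  proof clarify
    fix f assume "\<forall>i<m. f i \<in> conv_ideal (TrK (reps i))"
    then have "\<forall>i<m. f i \<in> ker_Delta t a"
      using conv_ideal_TrK_subset_ker_Delta[OF coprime] reps(1) by blast
    then show "(\<lambda>x. \<Sum>i<m. f i x) \<in> ker_Delta t a"
      by (simp add: ker_Delta_def conv_sum_left)
  qed
qed

lemma ker_Delta_orthogonal_decomposition:
  fixes a :: "nat \<Rightarrow> 'g::{ab_group_add,finite} \<Rightarrow> 'k::{field,finite}" and m :: nat
  assumes coprime: "coprime CARD('g) CHAR('k)"
    and reps: "\<forall>i<m. reps i \<in> harmonic_chars t a"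
      "Dq_orbit ` reps ` {..<m} = Dq_orbit ` harmonic_chars t a"
      "\<forall>i<m. \<forall>j<m. i \<noteq> j \<longrightarrow> Dq_orbit (reps i) \<noteq> Dq_orbit (reps j)"
  shows "ker_Delta t a = {(\<lambda>x. \<Sum>i<m. f i x) | f. \<forall>i<m. f i \<in> conv_ideal (TrK (reps i))}
    \<and> (\<forall>f. (\<forall>i<m. f i \<in> conv_ideal (TrK (reps i))) \<and> (\<lambda>x. \<Sum>i<m. f i x) = (\<lambda>_. 0)
           \<longrightarrow> (\<forall>i<m. f i = (\<lambda>_. 0)))
    \<and> (\<forall>i<m. \<forall>j<m. i \<noteq> j \<longrightarrow>
           (\<forall>f1\<in>conv_ideal (TrK (reps i)). \<forall>f2\<in>conv_ideal (TrK (reps j)). ip1 f1 f2 = 0))"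
proof (intro conjI)
  show "ker_Delta t a = {(\<lambda>x. \<Sum>i<m. f i x) | f. \<forall>i<m. f i \<in> conv_ideal (TrK (reps i))}"
    by (rule ker_Delta_eq_sum_conv_ideals[OF coprime reps])
  have rep: "reps i \<in> dual_group" if "i < m" for i
    using reps(1) that by (simp add: harmonic_chars_def)
  have TrK_TrK: "conv (TrK (reps i)) (TrK (reps j))
      = (if i = j then (\<lambda>x. of_nat CARD('g) * TrK (reps i) x) else (\<lambda>_. 0))"
    if "i < m" "j < m" for i j
    using conv_TrK_TrK[OF coprime rep[OF that(1)] rep[OF that(2)]] reps(3) that by auto
  have "of_nat CARD('g) \<noteq> (0 :: 'k)"
    using of_nat_neq_0_if_coprime_CHAR[OF coprime dvd_refl] .
  then show "\<forall>f. (\<forall>i<m. f i \<in> conv_ideal (TrK (reps i))) \<and> (\<lambda>x. \<Sum>i<m. f i x) = (\<lambda>_. 0)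
           \<longrightarrow> (\<forall>i<m. f i = (\<lambda>_. 0))"
    using conv_ideal_sum_eq_0[of m "\<lambda>i. TrK (reps i)", OF TrK_TrK] by blast
  show "\<forall>i<m. \<forall>j<m. i \<noteq> j \<longrightarrow>
           (\<forall>f1\<in>conv_ideal (TrK (reps i)). \<forall>f2\<in>conv_ideal (TrK (reps j)). ip1 f1 f2 = 0)"
  proof (intro allI impI ballI)
    fix i j f1 f2
    assume ij: "i < m" "j < m" "i \<noteq> j"
      and f: "f1 \<in> conv_ideal (TrK (reps i))" "f2 \<in> conv_ideal (TrK (reps j))"
    have "conv (TrK (reps i)) (TrK (reps j)) = (\<lambda>_. 0)"
      using TrK_TrK[OF ij(1,2)] ij(3) by simp
    then show "ip1 f1 f2 = 0"
      by (intro ip1_eq_0_if_conv_eq_0 conv_conv_ideal_eq_0[OF _ f])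
  qed
qed

theorem proposition4p3:
  fixes t :: nat and a :: "nat \<Rightarrow> 'g::{ab_group_add,finite} \<Rightarrow> 'k::{field,finite}"
  assumes coprime: "coprime CARD('g) CHAR('k)"
  defines "H \<equiv> harmonic_chars t a"
  shows
    "((\<forall>\<chi>\<in>H. Tr \<chi> ` UNIV \<subseteq> range to_ac) \<and>
      (\<exists>\<phi>. bij_betw \<phi> (Dq_orbit ` H) (Tr ` H) \<and> (\<forall>\<chi>\<in>H. \<phi> (Dq_orbit \<chi>) = Tr \<chi>)))
   \<and> (\<forall>(m::nat) reps. (\<forall>i<m. reps i \<in> H) \<and>
        Dq_orbit ` reps ` {..<m} = Dq_orbit ` H \<and>
        (\<forall>i<m. \<forall>j<m. i \<noteq> j \<longrightarrow> Dq_orbit (reps i) \<noteq> Dq_orbit (reps j)) \<longrightarrow>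
        ker_Delta t a = {(\<lambda>x. \<Sum>i<m. f i x) | f. \<forall>i<m. f i \<in> conv_ideal (TrK (reps i))}
      \<and> (\<forall>f. (\<forall>i<m. f i \<in> conv_ideal (TrK (reps i))) \<and> (\<lambda>x. \<Sum>i<m. f i x) = (\<lambda>_. 0)
              \<longrightarrow> (\<forall>i<m. f i = (\<lambda>_. 0)))
      \<and> (\<forall>i<m. \<forall>j<m. i \<noteq> j \<longrightarrow>
           (\<forall>f1\<in>conv_ideal (TrK (reps i)). \<forall>f2\<in>conv_ideal (TrK (reps j)). ip1 f1 f2 = 0)))
   \<and> (\<forall>\<chi>::'g \<Rightarrow> 'k alg_closure. \<chi> \<in> dual_group \<longrightarrow>
        \<chi> = (\<lambda>x. (\<Sum>g\<in>UNIV. \<chi> (- g) * Tr \<chi> (g + x)) / of_nat CARD('g)))"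
proof -
  have H: "harmonic_chars t a \<subseteq> dual_group"
    by (auto simp: harmonic_chars_def)
  show ?thesis
    unfolding H_def
    apply (intro conjI)
    subgoal
      using H by (auto intro: Tr_in_range_to_ac character_in_orbit_Dq[OF coprime])
    subgoal
      by (rule Dq_orbits_bij_betw_traces[OF coprime H])
    subgoal
      by (intro allI impI, elim conjE) (rule ker_Delta_orthogonal_decomposition[OF coprime])
    subgoal
      by (intro allI impI) (rule character_eq_Tr_average[OF coprime])
    done
qed

end
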